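(* Let $n\ge1$, $x_1\ge\dots\ge x_n>0$, fix $q>0$, and let $C=\{\pi_h,\pi_{h+1},\dots,\pi_{h+r}\}$ be a connected component of the multi-graph $\mathcal{MG}^x(q)$ constructed in the context (equivalently, the set of vertices carried by one excursion of $B^{x,q}$ above $0$, namely the excursion on the interval $[\xi^q_{(h)},\xi^q_{(h)}+x_{\pi_h}+\dots+x_{\pi_{h+r}}]$). Then the cumulative rate of surplus edges in $C$ up to time $q$, i.e. $\sum (q-T_{l;j-k})\,r_{l;j-k}$ over all triples $(l;j,k)$ with $l\in\{h,\dots,h+r\}$, $j\le k\le l$, ($k=l\Rightarrow j=l$), and $T_{l;j-k}\le q$, equals $q\int_{\xi^q_{(h)}}^{\xi^q_{(h)}+x_{\pi_h}+\dots+x_{\pi_{h+r}}}B^{x,q}(s)\,ds$, i.e. $q$ times the area under that excursion of $B^{x,q}$.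
   Context: Vertex $i\in[n]$ has mass $x_i$. Let $\xi_1,\dots,\xi_n$ be independent, $\xi_i$ exponential of rate $x_i$, order statistics $\xi_{(1)}<\dots<\xi_{(n)}$, permutation $\pi$ with $\xi_{\pi_i}=\xi_{(i)}$, $\xi^q_{(i)}=\xi_{(i)}/q$. Breadth-first walk $Z^{x,q}(s)=\sum_{i=1}^n x_i\mathbf 1(\xi_i/q\le s)-s$ and its reflection $B^{x,q}(s)=Z^{x,q}(s)-\inf_{u\le s}Z^{x,q}(u)$, $s\ge0$. Forest $\mathcal F_0(q)$: intervals $I^q_i=(a_i,b_i]$ with $I^q_1=(\xi^q_{(1)},\xi^q_{(1)}+x_{\pi_1}]$; for $i\ge2$, if $\xi^q_{(i)}\le b_{i-1}$ ($\pi_i$ non-root) then $I^q_i=(a_{i-1},b_{i-1}+x_{\pi_i}]$, else ($\pi_i$ root) $I^q_i=(\xi^q_{(i)},\xi^q_{(i)}+x_{\pi_i}]$; non-root $\pi_r$ gets edge $\pi_r\to\pi_i$ for the unique $i<r$ with $\xi^q_{(r)}\in I^q_i\setminus I^q_{i-1}$ ($I^q_0=\emptyset$). Components are blocks $\{\pi_i,\dots,\pi_m\}$ (a root followed by non-roots), matching the excursions of $B^{x,q}$ above $0$. Forest $\mathcal F_1$: no edges at time $0$; whenever trees $\{\pi_i,\dots,\pi_{j-1}\}$ and $\{\pi_j,\dots,\pi_{j+k}\}$ of $\mathcal F_0$ merge at time $q$, add an edge $L_1\to L_2$ with $L_1$, $L_2$ independent, $L_1$ chosen from the right block and $L_2$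 from the left block, each with probability proportional to mass. Surplus multi-edges: for $j\le k<l$, $T_{l;j-k}$ is the (possibly infinite) time at which the component of $\mathcal F_0$ containing $\pi_l$ merges with a component consisting of exactly $\{\pi_j,\dots,\pi_k\}$; $\zeta^{l;j-k}$ is (conditionally on $\xi$, independently) a Poisson process of rate $r_{l;j-k}=x_{\pi_l}(x_{\pi_j}+\dots+x_{\pi_k})$ whose arrivals after $T_{l;j-k}$ each create a new multi-edge $\pi_l\to\pi_I$ with $I\in\{j,\dots,k\}$ independent and $P(I=i)\propto x_{\pi_i}$. For each $l$, $T_{l;l-l}=0$ and $\zeta^{l;l-l}$ is a Poisson process of rate $r_{l;l-l}=x_{\pi_l}^2/2$, each arrival creating a self-loop $\pi_l\to\pi_l$. $\mathcal{MG}^x(q)$ is the multi-graph on $[n]$ consisting of the edges of $\mathcal F_1(q)$ together with all multi-edges and self-loops created up to time $q$. The cumulative rate of $\zeta^{l;j-k}$ up to time $q$ is $(q-T_{l;j-k})r_{l;j-k}$ on $\{T_{l;j-k}\le q\}$. *)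

theory Defs
  imports "HOL-Analysis.Analysis" "HOL-Library.Extended_Real"
begin

(* Vertices are 1..n, masses x v, exponential clocks xi v.
   \<pi> i is the vertex with the i-th smallest clock (i = 1..n).
   t > 0 is the time parameter (q in the paper); xi^t_(i) = xi (\<pi> i) / t. *)

(* right endpoint b_i of the interval I^t_i of the forest F_0(t) *)
fun bnd :: "(nat \<Rightarrow> real) \<Rightarrow> (nat \<Rightarrow> real) \<Rightarrow> (nat \<Rightarrow> nat) \<Rightarrow> real \<Rightarrow> nat \<Rightarrow> real" where
  "bnd x xi \<pi> t 0 = 0"
| "bnd x xi \<pi> t (Suc 0) = xi (\<pi> 1) / t + x (\<pi> 1)"
| "bnd x xi \<pi> t (Suc (Suc i)) =
     (if xi (\<pi> (i+2)) / t \<le> bnd x xi \<pi> t (Suc i)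
      then bnd x xi \<pi> t (Suc i) + x (\<pi> (i+2))
      else xi (\<pi> (i+2)) / t + x (\<pi> (i+2)))"

definition is_root :: "(nat \<Rightarrow> real) \<Rightarrow> (nat \<Rightarrow> real) \<Rightarrow> (nat \<Rightarrow> nat) \<Rightarrow> real \<Rightarrow> nat \<Rightarrow> bool" where
  "is_root x xi \<pi> t i \<longleftrightarrow> i = 1 \<or> (2 \<le> i \<and> xi (\<pi> i) / t > bnd x xi \<pi> t (i - 1))"

(* indices (positions in the order \<pi>) of the component of F_0(t) containing pi_i:
   a root followed by the subsequent non-roots *)
definition comp :: "nat \<Rightarrow> (nat \<Rightarrow> real) \<Rightarrow> (nat \<Rightarrow> real) \<Rightarrow> (nat \<Rightarrow> nat) \<Rightarrow> real \<Rightarrow> nat \<Rightarrow> nat set" where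
  "comp n x xi \<pi> t i = {j \<in> {1..n}. \<forall>m. min i j < m \<and> m \<le> max i j \<longrightarrow> \<not> is_root x xi \<pi> t m}"

(* the component of F_0 containing pi_l merges at time t with a component
   consisting of exactly {pi_j,...,pi_k} (j \<le> k < l) *)
definition merges_at :: "nat \<Rightarrow> (nat \<Rightarrow> real) \<Rightarrow> (nat \<Rightarrow> real) \<Rightarrow> (nat \<Rightarrow> nat) \<Rightarrow> nat \<Rightarrow> nat \<Rightarrow> nat \<Rightarrow> real \<Rightarrow> bool" where
  "merges_at n x xi \<pi> l j k t \<longleftrightarrow> 0 < t \<and> {j..k} \<subseteq> comp n x xi \<pi> t l \<and>
     (\<exists>\<epsilon>>0. \<forall>t'. 0 < t' \<and> t - \<epsilon> < t' \<and> t' < t \<longrightarrow>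
        comp n x xi \<pi> t' j = {j..k} \<and> comp n x xi \<pi> t' l \<inter> {j..k} = {})"

definition T_merge :: "nat \<Rightarrow> (nat \<Rightarrow> real) \<Rightarrow> (nat \<Rightarrow> real) \<Rightarrow> (nat \<Rightarrow> nat) \<Rightarrow> nat \<Rightarrow> nat \<Rightarrow> nat \<Rightarrow> ereal" where
  "T_merge n x xi \<pi> l j k =
     (if j = l \<and> k = l then 0 else Inf (ereal ` {t. merges_at n x xi \<pi> l j k t}))"

definition rate :: "(nat \<Rightarrow> real) \<Rightarrow> (nat \<Rightarrow> nat) \<Rightarrow> nat \<Rightarrow> nat \<Rightarrow> nat \<Rightarrow> real" where
  "rate x \<pi> l j k =
     (if j = l \<and> k = l then x (\<pi> l) ^ 2 / 2 else x (\<pi> l) * (\<Sum>i=j..k. x (\<pi> i)))"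

definition cum_rate :: "nat \<Rightarrow> (nat \<Rightarrow> real) \<Rightarrow> (nat \<Rightarrow> real) \<Rightarrow> (nat \<Rightarrow> nat) \<Rightarrow> real \<Rightarrow> nat \<Rightarrow> nat \<Rightarrow> real" where
  "cum_rate n x xi \<pi> q h r =
     (\<Sum>(l,j,k) \<in> {(l,j,k). l \<in> {h..h+r} \<and> 1 \<le> j \<and> j \<le> k \<and> k \<le> l \<and> (k = l \<longrightarrow> j = l)
                         \<and> T_merge n x xi \<pi> l j k \<le> ereal q}.
        (q - real_of_ereal (T_merge n x xi \<pi> l j k)) * rate x \<pi> l j k)"

definition Zw :: "nat \<Rightarrow> (nat \<Rightarrow> real) \<Rightarrow> (nat \<Rightarrow> real) \<Rightarrow> real \<Rightarrow> real \<Rightarrow> real" where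
  "Zw n x xi q s = (\<Sum>i=1..n. x i * (if xi i / q \<le> s then 1 else 0)) - s"

definition Bw :: "nat \<Rightarrow> (nat \<Rightarrow> real) \<Rightarrow> (nat \<Rightarrow> real) \<Rightarrow> real \<Rightarrow> real \<Rightarrow> real" where
  "Bw n x xi q s = Zw n x xi q s - Inf (Zw n x xi q ` {0..s})"

end

theory Submission
  imports Defs
begin

text \<open>Measured on the time scale of the clocks \<open>\<xi>\<close>, the right endpoint \<open>q b\<^sub>i\<close> of \<open>I\<^sup>q\<^sub>i\<close> is
  continuous and strictly increasing in \<open>q\<close>. Hence every non-root \<open>m\<close> of the excursion stops being
  a root at a single time \<open>\<tau>\<^sub>m \<le> q\<close>, and the merges into the tree of \<open>l\<close> with \<open>T \<le> q\<close> are exactly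
  the blocks \<open>{j..k}\<close> that are whole trees until \<open>\<tau>\<^sub>k\<^sub>+\<^sub>1\<close>. Following back the tree that \<open>l\<close> joins
  at \<open>\<tau>\<^sub>l\<close>, the sum over these merges of \<open>q - T\<close> times the mass of \<open>{j..k}\<close> telescopes to \<open>q\<close>
  times the height of \<open>B\<close> just before \<open>\<pi>\<^sub>l\<close> arrives. On the excursion, \<open>B\<close> consists of upward
  jumps of size \<open>x (\<pi> l)\<close> at the arrival times and unit downward drift, so its area is the sum
  over \<open>l\<close> of \<open>x (\<pi> l)\<close> times the height before the jump, plus \<open>x (\<pi> l)\<^sup>2 / 2\<close>. Multiplied by \<open>q\<close>,
  these two terms are the cumulative rates of the multi-edges from \<open>\<pi>\<^sub>l\<close> and of its self-loops.\<close>

section \<open>Sums and integrals\<close>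

lemma power2_sum_atLeastLessThan:
  fixes g :: "nat \<Rightarrow> 'a::comm_ring_1"
  shows "(\<Sum>p\<in>{m..<k}. g p)\<^sup>2 = (\<Sum>p\<in>{m..<k}. (g p)\<^sup>2 + 2 * g p * (\<Sum>i\<in>{m..<p}. g i))"
proof (induction k)
  case (Suc k)
  show ?case
  proof (cases "m \<le> k")
    case True
    then show ?thesis
      by (simp add: Suc.IH power2_sum algebra_simps)
  qed (simp add: Suc.IH)
qed simp

lemma has_integral_heaviside:
  fixes a b c :: real
  assumes "a \<le> c" "c \<le> b"
  shows "((\<lambda>s. if c \<le> s then 1 else 0) has_integral (b - c)) {a..b}"
proof -
  have "((\<lambda>s. if c \<le> s then 1 else 0) has_integral 0) {a..c}"
    by (rule has_integral_spike_finite[OF _ _ has_integral_0, of "{c}"]) auto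
  moreover have "((\<lambda>s. if c \<le> s then 1 else 0) has_integral (b - c)) {c..b}"
    using has_integral_const_real[of "1::real" c b] assms
    by (auto elim: has_integral_eq[rotated])
  ultimately show ?thesis
    using has_integral_combine[OF assms] by fastforce
qed

lemma has_integral_jumps_minus_drift:
  fixes a b :: real and c w :: "'i \<Rightarrow> real"
  assumes "finite P" "a \<le> b" "\<And>p. p \<in> P \<Longrightarrow> a \<le> c p \<and> c p \<le> b"
  shows "((\<lambda>s. (\<Sum>p\<in>P. w p * (if c p \<le> s then 1 else 0)) - (s - a)) has_integral
           (\<Sum>p\<in>P. w p * (b - c p)) - (b - a)\<^sup>2 / 2) {a..b}"
proof (rule has_integral_diff)
  show "((\<lambda>s. \<Sum>p\<in>P. w p * (if c p \<le> s then 1 else 0)) has_integral (\<Sum>p\<in>P. w p * (b - c p))) {a..b}"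
    using assms
    by (intro has_integral_sum[OF assms(1)] has_integral_mult_right[OF has_integral_heaviside]) auto
  have "((\<lambda>s. s - a) has_integral (b\<^sup>2 - a\<^sup>2) / 2 - (b - a) * a) {a..b}"
    using has_integral_diff[OF ident_has_integral[OF assms(2)] has_integral_const_real[of a a b]] assms(2)
    by simp
  moreover have "(b\<^sup>2 - a\<^sup>2) / 2 - (b - a) * a = (b - a)\<^sup>2 / 2"
    by (simp add: power2_eq_square field_simps)
  ultimately show "((\<lambda>s. s - a) has_integral (b - a)\<^sup>2 / 2) {a..b}"
    by simp
qed

section \<open>The forest as a function of time\<close>

locale ordered_clocks =
  fixes n :: nat and x xi :: "nat \<Rightarrow> real" and \<pi> :: "nat \<Rightarrow> nat"
  assumes mass_pos: "\<And>i. 1 \<le> i \<Longrightarrow> i \<le> n \<Longrightarrow> 0 < x i"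
    and clock_pos: "\<And>i. 1 \<le> i \<Longrightarrow> i \<le> n \<Longrightarrow> 0 < xi i"
    and perm: "bij_betw \<pi> {1..n} {1..n}"
    and clocks_increasing: "\<And>i j. 1 \<le> i \<Longrightarrow> i < j \<Longrightarrow> j \<le> n \<Longrightarrow> xi (\<pi> i) < xi (\<pi> j)"
begin

definition mass :: "nat \<Rightarrow> real" where "mass i = x (\<pi> i)"

definition clock :: "nat \<Rightarrow> real" where "clock i = xi (\<pi> i)"

text \<open>The endpoint \<open>b\<^sub>i\<close> of \<open>I\<^sup>t\<^sub>i\<close> measured on the time scale of the clocks \<open>\<xi>\<close>.\<close>
definition front :: "real \<Rightarrow> nat \<Rightarrow> real" where "front t i = t * bnd x xi \<pi> t i"

abbreviation root_at :: "real \<Rightarrow> nat \<Rightarrow> bool" where "root_at t i \<equiv> is_root x xi \<pi> t i"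

lemma mass_positive: "1 \<le> i \<Longrightarrow> i \<le> n \<Longrightarrow> 0 < mass i"
  unfolding mass_def using perm mass_pos by (meson atLeastAtMost_iff bij_betwE)

lemma mass_nonneg: "1 \<le> p \<Longrightarrow> p \<le> n \<Longrightarrow> 0 \<le> mass p"
  using mass_positive by (auto intro: less_imp_le)

lemma clock_positive: "1 \<le> i \<Longrightarrow> i \<le> n \<Longrightarrow> 0 < clock i"
  unfolding clock_def using perm clock_pos by (meson atLeastAtMost_iff bij_betwE)

lemma clock_less: "1 \<le> i \<Longrightarrow> i < j \<Longrightarrow> j \<le> n \<Longrightarrow> clock i < clock j"
  unfolding clock_def using clocks_increasing by blast

lemma clock_le: "1 \<le> i \<Longrightarrow> i \<le> j \<Longrightarrow> j \<le> n \<Longrightarrow> clock i \<le> clock j"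
  using clock_less by (metis le_less)

lemma front_1: "0 < t \<Longrightarrow> front t 1 = clock 1 + t * mass 1"
  unfolding front_def mass_def clock_def by (simp add: algebra_simps)

lemma front_Suc:
  assumes "0 < t" "1 \<le> i"
  shows "front t (Suc i) = max (clock (Suc i)) (front t i) + t * mass (Suc i)"
proof -
  obtain k where "i = Suc k" using assms(2) by (cases i) auto
  with assms(1) show ?thesis
    unfolding front_def mass_def clock_def by (auto simp: max_def field_simps)
qed

lemma root_at_iff: "0 < t \<Longrightarrow> root_at t i \<longleftrightarrow> i = 1 \<or> (2 \<le> i \<and> front t (i - 1) < clock i)"
  unfolding is_root_def front_def clock_def by (auto simp: field_simps)

lemma clock_le_front_pred: "0 < t \<Longrightarrow> 2 \<le> m \<Longrightarrow> \<not> root_at t m \<Longrightarrow> clock m \<le> front t (m - 1)"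
  using root_at_iff by auto

lemma front_strict_mono:
  assumes "0 < s" "s < t" "1 \<le> i" "i \<le> n"
  shows "front s i < front t i"
  using assms(3,4)
proof (induction i rule: nat_induct_at_least)
  case base
  then show ?case using front_1[of s] front_1[of t] assms mass_positive[of 1] by simp
next
  case (Suc i)
  then have "front s i < front t i" "s * mass (Suc i) < t * mass (Suc i)"
    using mass_positive[of "Suc i"] assms by simp_all
  then show ?case using front_Suc[of s i] front_Suc[of t i] Suc assms by (simp add: max_def)
qed

lemma front_mono: "0 < s \<Longrightarrow> s \<le> t \<Longrightarrow> 1 \<le> i \<Longrightarrow> i \<le> n \<Longrightarrow> front s i \<le> front t i"
  using front_strict_mono by (metis le_less)

lemma front_less_iff: "0 < s \<Longrightarrow> 0 < t \<Longrightarrow> 1 \<le> i \<Longrightarrow> i \<le> n \<Longrightarrow> front s i < front t i \<longleftrightarrow> s < t"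
  using front_strict_mono front_mono by (meson linorder_not_le)

lemma continuous_on_front: "1 \<le> i \<Longrightarrow> i \<le> n \<Longrightarrow> continuous_on {0<..} (\<lambda>t. front t i)"
proof (induction i rule: nat_induct_at_least)
  case base
  have "continuous_on {0<..} (\<lambda>t. clock 1 + t * mass 1)" by (intro continuous_intros)
  then show ?case by (rule continuous_on_eq) (simp add: front_1[unfolded One_nat_def])
next
  case (Suc i)
  then have "continuous_on {0<..} (\<lambda>t. max (clock (Suc i)) (front t i) + t * mass (Suc i))"
    by (intro continuous_intros) auto
  then show ?case by (rule continuous_on_eq) (use front_Suc Suc in auto)
qed

lemma front_le:
  assumes "1 \<le> i" "i \<le> n" "0 < t"
  shows "front t i \<le> clock i + t * (\<Sum>m=1..i. mass m)"
  using assms(1,2)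
proof (induction i rule: nat_induct_at_least)
  case base
  then show ?case using front_1 assms by simp
next
  case (Suc i)
  have "clock i \<le> clock (Suc i)" using clock_le Suc by simp
  moreover have "0 \<le> t * (\<Sum>m=1..i. mass m)"
    using assms mass_positive Suc by (intro mult_nonneg_nonneg sum_nonneg) (auto intro: less_imp_le)
  ultimately show ?case using front_Suc[of t i] Suc assms by (auto simp: max_def algebra_simps)
qed

lemma front_ge:
  assumes "1 \<le> j" "j \<le> i" "i \<le> n" "0 < t"
  shows "clock j + t * (\<Sum>m=j..i. mass m) \<le> front t i"
  using assms(2,3)
proof (induction i rule: nat_induct_at_least)
  case base
  show ?case
  proof (cases "j = 1")
    case False
    then obtain k where "j = Suc k" "1 \<le> k" using assms(1) by (cases j) auto
    then show ?thesis using front_Suc[of t k] assms by (simp add: max_def)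
  qed (use front_1 assms in simp)
next
  case (Suc i)
  then show ?case using front_Suc[of t i] assms by (auto simp: max_def algebra_simps)
qed

lemma front_block:
  assumes "0 < t" "1 \<le> J" "J + d \<le> n" "J = 1 \<or> front t (J - 1) \<le> clock J"
    and "\<And>m. J < m \<Longrightarrow> m \<le> J + d \<Longrightarrow> clock m \<le> front t (m - 1)"
  shows "front t (J + d) = clock J + t * (\<Sum>i=J..J+d. mass i)"
  using assms(3,5)
proof (induction d)
  case 0
  show ?case
  proof (cases "J = 1")
    case False
    then obtain k where "J = Suc k" "1 \<le> k" using assms(2) by (cases J) auto
    then show ?thesis using front_Suc[of t k] assms False by (simp add: max_def)
  qed (use front_1 assms in simp)
next
  case (Suc d)
  then have "front t (J + d) = clock J + t * (\<Sum>i=J..J+d. mass i)"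
    and "clock (Suc (J + d)) \<le> front t (J + d)"
    using Suc(3)[of "Suc (J + d)"] by simp_all
  then show ?case using front_Suc[of t "J + d"] assms by (simp add: max_def algebra_simps)
qed

lemma root_at_antimono: "0 < s \<Longrightarrow> s \<le> t \<Longrightarrow> root_at t m \<Longrightarrow> m \<le> n \<Longrightarrow> root_at s m"
  using root_at_iff front_mono[of s t "m - 1"] by force

lemma root_at_iff_less:
  assumes "0 < s" "0 < t" "2 \<le> m" "m \<le> n" "front s (m - 1) = clock m"
  shows "root_at t m \<longleftrightarrow> t < s"
  using root_at_iff[OF assms(2)] front_less_iff[of t s "m - 1"] assms by auto

lemma detach_time_exists:
  assumes "0 < q" "2 \<le> m" "m \<le> n" "\<not> root_at q m"
  shows "\<exists>t. 0 < t \<and> t \<le> q \<and> front t (m - 1) = clock m"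
proof -
  have pred: "1 \<le> m - 1" "m - 1 \<le> n" using assms by auto
  have up: "clock m \<le> front q (m - 1)" using assms root_at_iff[of q m] by simp
  define S where "S = (\<Sum>i=1..m-1. mass i)"
  have "0 \<le> S" unfolding S_def using mass_positive assms by (intro sum_nonneg) (auto intro: less_imp_le)
  define gap where "gap = clock m - clock (m - 1)"
  have "0 < gap" unfolding gap_def using clock_less[of "m - 1" m] assms by simp
  define t0 where "t0 = min q (gap / (S + 1))"
  have t0: "0 < t0" "t0 \<le> q" unfolding t0_def using assms \<open>0 < gap\<close> \<open>0 \<le> S\<close> by auto
  have "t0 * (S + 1) \<le> gap" unfolding t0_def using \<open>0 < gap\<close> \<open>0 \<le> S\<close>
    by (metis add_nonneg_pos min.cobounded2 mult.commute pos_le_divide_eq zero_less_one)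
  then have "clock (m - 1) + t0 * S \<le> clock m" using t0 unfolding gap_def by (simp add: algebra_simps)
  moreover have "front t0 (m - 1) \<le> clock (m - 1) + t0 * S"
    unfolding S_def using pred t0 by (intro front_le)
  ultimately have lo: "front t0 (m - 1) \<le> clock m" by simp
  have "continuous_on {t0..q} (\<lambda>t. front t (m - 1))"
    using continuous_on_front[OF pred] t0 by (auto elim: continuous_on_subset)
  then obtain t where "t0 \<le> t" "t \<le> q" "front t (m - 1) = clock m"
    using IVT'[of "\<lambda>t. front t (m - 1)" t0 "clock m" q] lo up t0 by auto
  with t0 show ?thesis by (intro exI[of _ t]) auto
qed

lemma subset_comp_iff:
  assumes "1 \<le> j" "j \<le> k" "k < l" "l \<le> n"
  shows "{j..k} \<subseteq> comp n x xi \<pi> t l \<longleftrightarrow> (\<forall>m. j < m \<and> m \<le> l \<longrightarrow> \<not> root_at t m)"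
proof
  assume "{j..k} \<subseteq> comp n x xi \<pi> t l"
  then have "j \<in> comp n x xi \<pi> t l" using assms by auto
  then show "\<forall>m. j < m \<and> m \<le> l \<longrightarrow> \<not> root_at t m" unfolding comp_def using assms by auto
qed (use assms in \<open>auto simp: comp_def\<close>)

lemma comp_eq_iff:
  assumes "1 \<le> j" "j \<le> k" "k < n"
  shows "comp n x xi \<pi> t j = {j..k} \<longleftrightarrow>
    root_at t j \<and> root_at t (Suc k) \<and> (\<forall>m. j < m \<and> m \<le> k \<longrightarrow> \<not> root_at t m)"
proof
  assume A: "comp n x xi \<pi> t j = {j..k}"
  have "k \<in> comp n x xi \<pi> t j" using A assms by auto
  then have inner: "\<forall>m. j < m \<and> m \<le> k \<longrightarrow> \<not> root_at t m" unfolding comp_def using assms by auto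
  have "Suc k \<notin> comp n x xi \<pi> t j" using A by auto
  then obtain m where "j < m" "m \<le> Suc k" "root_at t m" unfolding comp_def using assms by auto
  with inner have "root_at t (Suc k)" by (metis le_Suc_eq)
  moreover have "root_at t j"
  proof (cases "j = 1")
    case False
    then have "j - 1 \<notin> comp n x xi \<pi> t j" using A assms by auto
    then obtain m where "j - 1 < m" "m \<le> j" "root_at t m" unfolding comp_def using assms False by auto
    moreover have "m = j" using \<open>j - 1 < m\<close> \<open>m \<le> j\<close> by arith
    ultimately show ?thesis by simp
  qed (simp add: is_root_def)
  ultimately show "root_at t j \<and> root_at t (Suc k) \<and> (\<forall>m. j < m \<and> m \<le> k \<longrightarrow> \<not> root_at t m)"
    using inner by blast
next
  assume A: "root_at t j \<and> root_at t (Suc k) \<and> (\<forall>m. j < m \<and> m \<le> k \<longrightarrow> \<not> root_at t m)"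
  show "comp n x xi \<pi> t j = {j..k}"
  proof (intro set_eqI iffI)
    fix i assume "i \<in> comp n x xi \<pi> t j"
    then have between: "\<forall>m. min j i < m \<and> m \<le> max j i \<longrightarrow> \<not> root_at t m" unfolding comp_def by auto
    have "\<not> i < j" using between[rule_format, of j] A by auto
    moreover have "\<not> k < i" using between[rule_format, of "Suc k"] A assms by auto
    ultimately show "i \<in> {j..k}" by auto
  next
    fix i assume "i \<in> {j..k}"
    then show "i \<in> comp n x xi \<pi> t j" unfolding comp_def using A assms by auto
  qed
qed

lemma comp_disjoint:
  assumes "j \<le> k" "k < l" "root_at t (Suc k)"
  shows "comp n x xi \<pi> t l \<inter> {j..k} = {}"
proof -
  have "i \<notin> comp n x xi \<pi> t l" if "i \<le> k" for i
  proof
    assume "i \<in> comp n x xi \<pi> t l"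
    then have "\<forall>m. min l i < m \<and> m \<le> max l i \<longrightarrow> \<not> root_at t m" unfolding comp_def by auto
    then show False using that assms by auto
  qed
  then show ?thesis by auto
qed

lemma merges_at_iff:
  assumes "1 \<le> j" "j \<le> k" "k < l" "l \<le> n"
  shows "merges_at n x xi \<pi> l j k t \<longleftrightarrow> 0 < t \<and> (\<forall>m. j < m \<and> m \<le> l \<longrightarrow> \<not> root_at t m) \<and>
    (\<exists>e>0. \<forall>t'. 0 < t' \<and> t - e < t' \<and> t' < t \<longrightarrow>
       root_at t' j \<and> root_at t' (Suc k) \<and> (\<forall>m. j < m \<and> m \<le> k \<longrightarrow> \<not> root_at t' m))"
proof -
  have "k < n" using assms by simp
  have "\<And>t'. root_at t' (Suc k) \<Longrightarrow> comp n x xi \<pi> t' l \<inter> {j..k} = {}"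
    using comp_disjoint assms by blast
  then show ?thesis
    unfolding merges_at_def subset_comp_iff[OF assms] comp_eq_iff[OF assms(1,2) \<open>k < n\<close>] by blast
qed

lemma merges_at_unique:
  assumes "merges_at n x xi \<pi> l j k t1" "merges_at n x xi \<pi> l j k t2"
    and "1 \<le> j" "j \<le> k" "k < l" "l \<le> n"
  shows "t1 = t2"
proof -
  have "\<not> s < t" if "merges_at n x xi \<pi> l j k s" "merges_at n x xi \<pi> l j k t" for s t
  proof
    assume "s < t"
    from that obtain e where "0 < s" "\<not> root_at s (Suc k)" "0 < e"
      and before_t: "\<And>t'. 0 < t' \<Longrightarrow> t - e < t' \<Longrightarrow> t' < t \<Longrightarrow> root_at t' (Suc k)"
      unfolding merges_at_iff[OF assms(3-6)] using assms by auto
    define t' where "t' = max s (t - e / 2)"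
    have "root_at t' (Suc k)" using before_t \<open>0 < s\<close> \<open>0 < e\<close> \<open>s < t\<close> unfolding t'_def by simp
    then have "root_at s (Suc k)" using root_at_antimono[of s t' "Suc k"] \<open>0 < s\<close> assms unfolding t'_def by simp
    with \<open>\<not> root_at s (Suc k)\<close> show False ..
  qed
  with assms show ?thesis by (meson linorder_neqE)
qed

end

section \<open>Merge times within one component\<close>

locale excursion = ordered_clocks +
  fixes q :: real and h r :: nat
  assumes q_pos: "0 < q"
    and first_pos: "1 \<le> h" and last_le: "h + r \<le> n"
    and root_first: "is_root x xi \<pi> q h"
    and nonroot_inside: "\<And>m. h < m \<Longrightarrow> m \<le> h + r \<Longrightarrow> \<not> is_root x xi \<pi> q m"
    and root_next: "h + r = n \<or> is_root x xi \<pi> q (h + r + 1)"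
begin

definition detach_time :: "nat \<Rightarrow> real" where
  "detach_time m = (SOME t. 0 < t \<and> t \<le> q \<and> front t (m - 1) = clock m)"

lemma detach_time:
  assumes "h < m" "m \<le> h + r"
  shows "0 < detach_time m" "detach_time m \<le> q" "front (detach_time m) (m - 1) = clock m"
proof -
  have "\<exists>t. 0 < t \<and> t \<le> q \<and> front t (m - 1) = clock m"
    using detach_time_exists[OF q_pos _ _ nonroot_inside[OF assms]] assms first_pos last_le by simp
  from someI_ex[OF this] show "0 < detach_time m" "detach_time m \<le> q" "front (detach_time m) (m - 1) = clock m"
    unfolding detach_time_def by auto
qed

lemma root_at_iff_before_detach:
  "h < m \<Longrightarrow> m \<le> h + r \<Longrightarrow> 0 < t \<Longrightarrow> root_at t m \<longleftrightarrow> t < detach_time m"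
  using root_at_iff_less[OF detach_time(1) _ _ _ detach_time(3)] first_pos last_le by simp

lemma le_detach_time_if_root_before:
  assumes "h < m" "m \<le> h + r" "0 < e"
    and root_before: "\<And>t'. 0 < t' \<Longrightarrow> t - e < t' \<Longrightarrow> t' < t \<Longrightarrow> root_at t' m"
  shows "t \<le> detach_time m"
proof (rule ccontr)
  assume "\<not> t \<le> detach_time m"
  define t' where "t' = max (detach_time m) (t - e / 2)"
  have "0 < t'" "t - e < t'" "t' < t"
    unfolding t'_def using \<open>\<not> t \<le> detach_time m\<close> assms(3) detach_time(1)[OF assms(1,2)] by auto
  then have "t' < detach_time m"
    using root_before root_at_iff_before_detach[OF assms(1,2)] by blast
  then show False unfolding t'_def by simp
qed

lemma root_first_before: "0 < t \<Longrightarrow> t \<le> q \<Longrightarrow> root_at t h"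
  using root_at_antimono[OF _ _ root_first] last_le by simp

text \<open>\<open>(j, k) \<in> absorbed_blocks l\<close> says that the tree \<open>{j..k}\<close> joins the tree of \<open>l\<close> at the
  detach time of \<open>k + 1\<close>. Position \<open>h\<close> stays a root up to time \<open>q\<close>, so \<open>j = h\<close> needs no condition.\<close>
definition absorbed_blocks :: "nat \<Rightarrow> (nat \<times> nat) set" where
  "absorbed_blocks l = {(j, k). h \<le> j \<and> j \<le> k \<and> k < l \<and>
     (j = h \<or> detach_time (Suc k) \<le> detach_time j) \<and>
     (\<forall>m. j < m \<and> m \<le> k \<longrightarrow> detach_time m < detach_time (Suc k)) \<and>
     (\<forall>m. Suc k < m \<and> m \<le> l \<longrightarrow> detach_time m \<le> detach_time (Suc k))}"

lemma finite_absorbed_blocks: "finite (absorbed_blocks l)"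
proof (rule finite_subset)
  show "absorbed_blocks l \<subseteq> {0..l} \<times> {0..l}" unfolding absorbed_blocks_def by auto
qed simp

lemma merges_at_imp_absorbed:
  assumes merge: "merges_at n x xi \<pi> l j k t" and "t \<le> q"
    and l: "h \<le> l" "l \<le> h + r" and jk: "1 \<le> j" "j \<le> k" "k < l"
  shows "(j, k) \<in> absorbed_blocks l" "t = detach_time (Suc k)"
proof -
  obtain e where "0 < t" and detached: "\<And>m. j < m \<Longrightarrow> m \<le> l \<Longrightarrow> \<not> root_at t m" and "0 < e"
    and before: "\<And>t'. 0 < t' \<Longrightarrow> t - e < t' \<Longrightarrow> t' < t \<Longrightarrow>
      root_at t' j \<and> root_at t' (Suc k) \<and> (\<forall>m. j < m \<and> m \<le> k \<longrightarrow> \<not> root_at t' m)"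
    using merge unfolding merges_at_iff[OF jk, OF le_trans[OF l(2) last_le]] by blast
  have "h \<le> j"
    using detached[of h] root_first_before[OF \<open>0 < t\<close> \<open>t \<le> q\<close>] l by force
  have detach_le: "detach_time m \<le> t" if "j < m" "m \<le> l" for m
    using detached[OF that] root_at_iff_before_detach[of m t] that \<open>h \<le> j\<close> l \<open>0 < t\<close> by simp
  have "t \<le> detach_time (Suc k)"
    using le_detach_time_if_root_before[OF _ _ \<open>0 < e\<close>] before \<open>h \<le> j\<close> jk l by simp
  then show t_eq: "t = detach_time (Suc k)"
    using detach_le[of "Suc k"] jk by simp
  have "detach_time m < detach_time (Suc k)" if "j < m" "m \<le> k" for m
  proof -
    define t' where "t' = max (t / 2) (t - e / 2)"
    have "0 < t'" "t - e < t'" "t' < t" unfolding t'_def using \<open>0 < e\<close> \<open>0 < t\<close> by auto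
    then have "\<not> root_at t' m" using before that by blast
    then have "detach_time m \<le> t'"
      using root_at_iff_before_detach[of m t'] that \<open>h \<le> j\<close> jk l \<open>0 < t'\<close> by simp
    with \<open>t' < t\<close> t_eq show ?thesis by simp
  qed
  moreover have "j = h \<or> detach_time (Suc k) \<le> detach_time j"
    using le_detach_time_if_root_before[of j e t] before \<open>0 < e\<close> \<open>h \<le> j\<close> jk l t_eq by force
  ultimately show "(j, k) \<in> absorbed_blocks l"
    unfolding absorbed_blocks_def using detach_le t_eq \<open>h \<le> j\<close> jk by auto
qed

lemma absorbed_imp_merges_at:
  assumes "(j, k) \<in> absorbed_blocks l" "h \<le> l" "l \<le> h + r"
  shows "merges_at n x xi \<pi> l j k (detach_time (Suc k))"
proof -
  define t where "t = detach_time (Suc k)"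
  have jk: "h \<le> j" "j \<le> k" "k < l" and start: "j = h \<or> t \<le> detach_time j"
    and inner: "\<And>m. j < m \<Longrightarrow> m \<le> k \<Longrightarrow> detach_time m < t"
    and outer: "\<And>m. Suc k < m \<Longrightarrow> m \<le> l \<Longrightarrow> detach_time m \<le> t"
    using assms(1) unfolding absorbed_blocks_def t_def by auto
  have "h < Suc k" "Suc k \<le> h + r" using jk assms by auto
  note detach_Suc_k = detach_time[OF this, folded t_def]
  have "\<not> root_at t m" if "j < m" "m \<le> l" for m
  proof -
    have "detach_time m \<le> t"
      using inner[of m] outer[of m] that t_def by (cases "m \<le> k"; cases "m = Suc k") auto
    then show ?thesis
      using root_at_iff_before_detach[of m t] that jk assms detach_Suc_k by simp
  qed
  moreover define e where "e = t - Max (insert 0 (detach_time ` {j<..k}))"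
  have "0 < e" unfolding e_def using inner detach_Suc_k by auto
  moreover have "root_at t' j \<and> root_at t' (Suc k) \<and> (\<forall>m. j < m \<and> m \<le> k \<longrightarrow> \<not> root_at t' m)"
    if "0 < t'" "t - e < t'" "t' < t" for t'
  proof (intro conjI allI impI)
    show "root_at t' (Suc k)"
      using root_at_iff_before_detach[of "Suc k" t'] that jk assms t_def by simp
    show "root_at t' j"
      using start root_first_before[of t'] root_at_iff_before_detach[of j t'] that jk assms detach_Suc_k
      by (cases "j = h") auto
    fix m assume "j < m \<and> m \<le> k"
    then have "detach_time m \<le> Max (insert 0 (detach_time ` {j<..k}))"
      by (intro Max_ge) auto
    then have "detach_time m < t'" using that(2) unfolding e_def by linarith
    then show "\<not> root_at t' m"
      using root_at_iff_before_detach[of m t'] \<open>j < m \<and> m \<le> k\<close> that(1) jk assms by simp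
  qed
  moreover have "1 \<le> j" "l \<le> n" using first_pos jk assms last_le by auto
  ultimately show ?thesis
    unfolding t_def[symmetric] merges_at_iff[OF \<open>1 \<le> j\<close> jk(2,3) \<open>l \<le> n\<close>]
    using detach_Suc_k(1) by blast
qed

lemma T_merge_absorbed:
  assumes "h \<le> l" "l \<le> h + r" "1 \<le> j" "j \<le> k" "k < l"
  shows "T_merge n x xi \<pi> l j k \<le> ereal q \<longleftrightarrow> (j, k) \<in> absorbed_blocks l"
    and "(j, k) \<in> absorbed_blocks l \<Longrightarrow> T_merge n x xi \<pi> l j k = ereal (detach_time (Suc k))"
proof -
  define M where "M = {t. merges_at n x xi \<pi> l j k t}"
  have T: "T_merge n x xi \<pi> l j k = Inf (ereal ` M)" unfolding T_merge_def M_def using assms by auto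
  have single: "M = {t}" if "t \<in> M" for t
    using that merges_at_unique[of l j k] assms last_le unfolding M_def by fastforce
  show T_eq: "T_merge n x xi \<pi> l j k = ereal (detach_time (Suc k))" if "(j, k) \<in> absorbed_blocks l"
    using single[of "detach_time (Suc k)"] absorbed_imp_merges_at[OF that assms(1,2)] T
    unfolding M_def by simp
  show "T_merge n x xi \<pi> l j k \<le> ereal q \<longleftrightarrow> (j, k) \<in> absorbed_blocks l"
  proof
    assume le_q: "T_merge n x xi \<pi> l j k \<le> ereal q"
    then obtain t where "t \<in> M" using T by (cases "M = {}") (auto simp: top_ereal_def)
    then have "T_merge n x xi \<pi> l j k = ereal t" using single[OF \<open>t \<in> M\<close>] T by simp
    with le_q \<open>t \<in> M\<close> show "(j, k) \<in> absorbed_blocks l"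
      using merges_at_imp_absorbed[of l j k t] assms unfolding M_def by auto
  next
    assume "(j, k) \<in> absorbed_blocks l"
    moreover have "detach_time (Suc k) \<le> q"
      using \<open>(j, k) \<in> absorbed_blocks l\<close> detach_time(2)[of "Suc k"] assms
      unfolding absorbed_blocks_def by auto
    ultimately show "T_merge n x xi \<pi> l j k \<le> ereal q" using T_eq by simp
  qed
qed

text \<open>The tree that \<open>l\<close> joins at its detach time is \<open>{joining_start l..l - 1}\<close>.\<close>
definition joining_start :: "nat \<Rightarrow> nat" where
  "joining_start l = Max {j \<in> {h..<l}. j = h \<or> detach_time l \<le> detach_time j}"

lemma joining_start:
  assumes "h < l"
  shows "h \<le> joining_start l" "joining_start l < l"
    and "joining_start l = h \<or> detach_time l \<le> detach_time (joining_start l)"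
    and "\<And>m. joining_start l < m \<Longrightarrow> m < l \<Longrightarrow> detach_time m < detach_time l"
proof -
  define S where "S = {j \<in> {h..<l}. j = h \<or> detach_time l \<le> detach_time j}"
  have "finite S" "h \<in> S" unfolding S_def using assms by auto
  then have "joining_start l \<in> S" unfolding joining_start_def S_def[symmetric] by (intro Max_in) auto
  then show "h \<le> joining_start l" "joining_start l < l"
    and "joining_start l = h \<or> detach_time l \<le> detach_time (joining_start l)"
    unfolding S_def by auto
  fix m assume "joining_start l < m" "m < l"
  then have "m \<notin> S" using Max_ge[OF \<open>finite S\<close>] unfolding joining_start_def S_def[symmetric] by fastforce
  with \<open>joining_start l < m\<close> \<open>m < l\<close> \<open>h \<le> joining_start l\<close> show "detach_time m < detach_time l"
    unfolding S_def by auto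
qed

lemma absorbed_blocks_subset_step:
  assumes "h < l"
  shows "absorbed_blocks l \<subseteq> insert (joining_start l, l - 1) (absorbed_blocks (joining_start l))"
proof
  define J where "J = joining_start l"
  note J = joining_start[OF assms, folded J_def]
  fix p assume "p \<in> absorbed_blocks l"
  then obtain j k where p: "p = (j, k)" and jk: "h \<le> j" "j \<le> k" "k < l"
    and start: "j = h \<or> detach_time (Suc k) \<le> detach_time j"
    and inner: "\<forall>m. j < m \<and> m \<le> k \<longrightarrow> detach_time m < detach_time (Suc k)"
    and outer: "\<forall>m. Suc k < m \<and> m \<le> l \<longrightarrow> detach_time m \<le> detach_time (Suc k)"
    unfolding absorbed_blocks_def by auto
  show "p \<in> insert (J, l - 1) (absorbed_blocks J)"
  proof (cases "Suc k = l")
    case True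
    have "\<not> J < j" using J(1) J(4)[of j] start jk True by auto
    moreover have "\<not> j < J"
    proof
      assume "j < J"
      then have "detach_time J < detach_time l" "J \<noteq> h" using inner J(2) jk True by auto
      with J(3) show False by simp
    qed
    ultimately show ?thesis using p True by auto
  next
    case False
    then have "detach_time l \<le> detach_time (Suc k)" using outer jk by simp
    then have "Suc k \<le> J" using J(4)[of "Suc k"] False jk by fastforce
    then have "(j, k) \<in> absorbed_blocks J" unfolding absorbed_blocks_def using jk start inner outer J by auto
    then show ?thesis using p by simp
  qed
qed

lemma step_subset_absorbed_blocks:
  assumes "h < l"
  shows "insert (joining_start l, l - 1) (absorbed_blocks (joining_start l)) \<subseteq> absorbed_blocks l"
proof -
  define J where "J = joining_start l"
  note J = joining_start[OF assms, folded J_def]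
  have "(J, l - 1) \<in> absorbed_blocks l"
    unfolding absorbed_blocks_def using J assms by auto
  moreover have "(j, k) \<in> absorbed_blocks l" if "(j, k) \<in> absorbed_blocks J" for j k
  proof -
    from that have jk: "h \<le> j" "j \<le> k" "k < J"
      and start: "j = h \<or> detach_time (Suc k) \<le> detach_time j"
      and inner: "\<forall>m. j < m \<and> m \<le> k \<longrightarrow> detach_time m < detach_time (Suc k)"
      and outer: "\<forall>m. Suc k < m \<and> m \<le> J \<longrightarrow> detach_time m \<le> detach_time (Suc k)"
      unfolding absorbed_blocks_def by auto
    have "detach_time J \<le> detach_time (Suc k)" using outer jk by (cases "J = Suc k") auto
    moreover have "detach_time l \<le> detach_time J" using J(3) jk by auto
    ultimately have "detach_time m \<le> detach_time (Suc k)" if "J < m" "m \<le> l" for m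
      using J(4)[of m] that by (cases "m = l") auto
    with outer have "\<forall>m. Suc k < m \<and> m \<le> l \<longrightarrow> detach_time m \<le> detach_time (Suc k)"
      by (meson not_less)
    then show ?thesis unfolding absorbed_blocks_def using jk start inner J by auto
  qed
  ultimately show ?thesis unfolding J_def by auto
qed

lemma absorbed_blocks_step:
  "h < l \<Longrightarrow> absorbed_blocks l = insert (joining_start l, l - 1) (absorbed_blocks (joining_start l))"
  using absorbed_blocks_subset_step step_subset_absorbed_blocks by (rule equalityI)

text \<open>Both sides are the front of the tree \<open>{joining_start l..l - 1}\<close> at the detach time of \<open>l\<close>.\<close>
lemma clock_eq_joining_start:
  assumes "h < l" "l \<le> h + r"
  shows "clock l = clock (joining_start l) + detach_time l * (\<Sum>i\<in>{joining_start l..<l}. mass i)"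
proof -
  define J where "J = joining_start l"
  define \<tau> where "\<tau> = detach_time l"
  note J = joining_start[OF assms(1), folded J_def \<tau>_def]
  note \<tau> = detach_time[OF assms, folded \<tau>_def]
  have "J = 1 \<or> front \<tau> (J - 1) \<le> clock J"
  proof (cases "J = h")
    case True
    then have "h = 1 \<or> front q (h - 1) < clock h" using root_at_iff[OF q_pos] root_first by auto
    moreover have "front \<tau> (h - 1) \<le> front q (h - 1) \<or> h = 1"
      using front_mono[of \<tau> q "h - 1"] \<tau> first_pos last_le by auto
    ultimately show ?thesis using True by auto
  next
    case False
    then have "h < J" "J \<le> h + r" using J assms by auto
    moreover have "\<tau> \<le> detach_time J" using J(3) False by simp
    ultimately show ?thesis
      using front_mono[of \<tau> "detach_time J" "J - 1"] detach_time[of J] \<tau> first_pos last_le by simp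
  qed
  moreover have "clock m \<le> front \<tau> (m - 1)" if "J < m" "m \<le> J + (l - 1 - J)" for m
  proof -
    have "h < m" "m \<le> h + r" "detach_time m < \<tau>" using that J assms by auto
    then show ?thesis
      using clock_le_front_pred root_at_iff_before_detach[of m \<tau>] \<tau> first_pos by simp
  qed
  ultimately have "front \<tau> (J + (l - 1 - J)) = clock J + \<tau> * (\<Sum>i=J..J + (l - 1 - J). mass i)"
    using front_block[of \<tau> J "l - 1 - J"] \<tau> J first_pos assms last_le by simp
  moreover have "J + (l - 1 - J) = l - 1" "{J..l - 1} = {J..<l}" using J by auto
  ultimately show ?thesis using \<tau> unfolding J_def \<tau>_def by simp
qed

text \<open>The height of \<open>B\<^sup>x\<^sup>,\<^sup>q\<close> just before \<open>\<pi>\<^sub>l\<close> arrives.\<close>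
definition arrival_height :: "nat \<Rightarrow> real" where
  "arrival_height l = clock h / q + (\<Sum>i\<in>{h..<l}. mass i) - clock l / q"

lemma sum_absorbed_blocks:
  assumes "h \<le> l" "l \<le> h + r"
  shows "(\<Sum>(j, k)\<in>absorbed_blocks l. (q - detach_time (Suc k)) * (\<Sum>i=j..k. mass i)) =
    q * arrival_height l"
  using assms
proof (induction l rule: less_induct)
  case (less l)
  show ?case
  proof (cases "l = h")
    case True
    then have "absorbed_blocks l = {}" unfolding absorbed_blocks_def by auto
    with True show ?thesis by (simp add: arrival_height_def)
  next
    case False
    define J where "J = joining_start l"
    have "h < l" using False less.prems by simp
    note J = joining_start[OF this, folded J_def]
    have "(J, l - 1) \<notin> absorbed_blocks J" unfolding absorbed_blocks_def using J by auto
    then have "(\<Sum>(j, k)\<in>absorbed_blocks l. (q - detach_time (Suc k)) * (\<Sum>i=j..k. mass i)) =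
        (q - detach_time l) * (\<Sum>i\<in>{J..<l}. mass i) + q * arrival_height J"
      using absorbed_blocks_step[OF \<open>h < l\<close>, folded J_def] finite_absorbed_blocks
        less.IH[of J] J less.prems \<open>h < l\<close> atLeastLessThanSuc_atLeastAtMost[of J "l - 1"]
      by simp
    also have "\<dots> = q * arrival_height l"
    proof -
      have "(\<Sum>i\<in>{h..<l}. mass i) = (\<Sum>i\<in>{h..<J}. mass i) + (\<Sum>i\<in>{J..<l}. mass i)"
        using sum.atLeastLessThan_concat[of h J l mass] J by simp
      then show ?thesis
        using clock_eq_joining_start[OF \<open>h < l\<close> less.prems(2), folded J_def] q_pos
        by (simp add: arrival_height_def field_simps)
    qed
    finally show ?thesis .
  qed
qed

section \<open>Cumulative surplus rate and the area of the excursion\<close>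

lemma surplus_index_set:
  "{(l, j, k). l \<in> {h..h+r} \<and> 1 \<le> j \<and> j \<le> k \<and> k \<le> l \<and> (k = l \<longrightarrow> j = l) \<and>
      T_merge n x xi \<pi> l j k \<le> ereal q} =
   Sigma {h..h+r} (\<lambda>l. insert (l, l) (absorbed_blocks l))"
proof (intro set_eqI)
  fix p :: "nat \<times> nat \<times> nat"
  obtain l j k where p: "p = (l, j, k)" by (cases p) auto
  have T_diag: "T_merge n x xi \<pi> l l l = 0" by (simp add: T_merge_def)
  have absorbed: "(j, k) \<in> absorbed_blocks l \<Longrightarrow> h \<le> j \<and> j \<le> k \<and> k < l"
    by (auto simp: absorbed_blocks_def)
  have T_le_iff: "T_merge n x xi \<pi> l j k \<le> ereal q \<longleftrightarrow> (j, k) \<in> absorbed_blocks l"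
    if "l \<in> {h..h+r}" "1 \<le> j" "j \<le> k" "k < l"
    using T_merge_absorbed(1) that by auto
  show "p \<in> {(l, j, k). l \<in> {h..h+r} \<and> 1 \<le> j \<and> j \<le> k \<and> k \<le> l \<and> (k = l \<longrightarrow> j = l) \<and>
      T_merge n x xi \<pi> l j k \<le> ereal q} \<longleftrightarrow> p \<in> Sigma {h..h+r} (\<lambda>l. insert (l, l) (absorbed_blocks l))"
  proof (cases "k = l")
    case True
    then show ?thesis unfolding p using T_diag absorbed q_pos first_pos by auto
  next
    case False
    then show ?thesis unfolding p using absorbed T_le_iff first_pos by fastforce
  qed
qed

lemma cum_rate_eq:
  "cum_rate n x xi \<pi> q h r = q * (\<Sum>l=h..h+r. (mass l)\<^sup>2 / 2 + mass l * arrival_height l)"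
proof -
  let ?term = "\<lambda>l (j, k). (q - real_of_ereal (T_merge n x xi \<pi> l j k)) * rate x \<pi> l j k"
  have "cum_rate n x xi \<pi> q h r = (\<Sum>l=h..h+r. \<Sum>p\<in>insert (l, l) (absorbed_blocks l). ?term l p)"
    unfolding cum_rate_def surplus_index_set by (subst sum.Sigma) (auto simp: finite_absorbed_blocks)
  also have "\<dots> = (\<Sum>l=h..h+r. q * ((mass l)\<^sup>2 / 2 + mass l * arrival_height l))"
  proof (rule sum.cong[OF refl])
    fix l assume l: "l \<in> {h..h+r}"
    have "(\<Sum>p\<in>absorbed_blocks l. ?term l p) =
        mass l * (\<Sum>(j, k)\<in>absorbed_blocks l. (q - detach_time (Suc k)) * (\<Sum>i=j..k. mass i))"
    proof (subst sum_distrib_left, rule sum.cong[OF refl])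
      fix p assume "p \<in> absorbed_blocks l"
      moreover obtain j k where "p = (j, k)" by fastforce
      ultimately show "?term l p = mass l * (case p of (j, k) \<Rightarrow> (q - detach_time (Suc k)) * (\<Sum>i=j..k. mass i))"
        using T_merge_absorbed(2)[of l j k] l first_pos
        by (auto simp: absorbed_blocks_def rate_def mass_def)
    qed
    moreover have "(l, l) \<notin> absorbed_blocks l" by (auto simp: absorbed_blocks_def)
    ultimately show "(\<Sum>p\<in>insert (l, l) (absorbed_blocks l). ?term l p) =
        q * ((mass l)\<^sup>2 / 2 + mass l * arrival_height l)"
      using sum_absorbed_blocks[of l] l finite_absorbed_blocks
      by (simp add: T_merge_def rate_def mass_def algebra_simps)
  qed
  also have "\<dots> = q * (\<Sum>l=h..h+r. (mass l)\<^sup>2 / 2 + mass l * arrival_height l)"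
    by (simp add: sum_distrib_left)
  finally show ?thesis .
qed

definition exc_start :: real where "exc_start = clock h / q"

definition exc_mass :: real where "exc_mass = (\<Sum>i=h..h+r. mass i)"

definition arrived :: "real \<Rightarrow> nat set" where "arrived u = {p \<in> {1..n}. clock p / q \<le> u}"

definition walk_floor :: real where "walk_floor = (\<Sum>p\<in>{1..<h}. mass p) - exc_start"

lemma Zw_eq_arrived: "Zw n x xi q u = (\<Sum>p\<in>arrived u. mass p) - u"
proof -
  have "(\<Sum>i=1..n. x i * (if xi i / q \<le> u then 1 else 0)) =
      (\<Sum>p=1..n. mass p * (if clock p / q \<le> u then 1 else 0))"
    unfolding mass_def clock_def
    using sum.reindex_bij_betw[OF perm, of "\<lambda>i. x i * (if xi i / q \<le> u then 1 else 0)"] by simp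
  also have "\<dots> = (\<Sum>p\<in>arrived u. mass p)"
    unfolding arrived_def by (subst sum.inter_filter) (auto intro: sum.cong)
  finally show ?thesis unfolding Zw_def by simp
qed

lemma front_q_block:
  assumes "h \<le> p" "p \<le> h + r"
  shows "front q p = clock h + q * (\<Sum>i=h..p. mass i)"
proof -
  have "h = 1 \<or> front q (h - 1) \<le> clock h"
    using root_first root_at_iff[OF q_pos, of h] by auto
  moreover have "clock m \<le> front q (m - 1)" if "h < m" "m \<le> h + (p - h)" for m
    using clock_le_front_pred[OF q_pos _ nonroot_inside] that assms first_pos by auto
  ultimately show ?thesis
    using front_block[OF q_pos first_pos, of "p - h"] assms last_le by simp
qed

lemma arrival_height_nonneg:
  assumes "h \<le> p" "p \<le> h + r"
  shows "0 \<le> arrival_height p"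
proof (cases "p = h")
  case False
  then have "h < p" using assms by simp
  then have "clock p \<le> front q (p - 1)"
    using clock_le_front_pred[OF q_pos _ nonroot_inside] assms first_pos by simp
  also have "\<dots> = clock h + q * (\<Sum>i\<in>{h..<p}. mass i)"
    using front_q_block[of "p - 1"] \<open>h < p\<close> assms atLeastLessThanSuc_atLeastAtMost[of h "p - 1"] by simp
  finally have "clock p / q \<le> (clock h + q * (\<Sum>i\<in>{h..<p}. mass i)) / q"
    using q_pos by (simp add: divide_right_mono)
  then show ?thesis unfolding arrival_height_def using q_pos by (simp add: add_divide_distrib)
qed (simp add: arrival_height_def)

lemma arrival_after_excursion:
  assumes "h + r < p" "p \<le> n"
  shows "exc_start + exc_mass < clock p / q"
proof -
  have "is_root x xi \<pi> q (h + r + 1)" using root_next assms by auto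
  then have "front q (h + r) < clock (h + r + 1)" using root_at_iff[OF q_pos] first_pos by auto
  also have "\<dots> \<le> clock p" using clock_le[of "h + r + 1" p] assms by simp
  finally have "clock h + q * exc_mass < clock p" using front_q_block[of "h + r"] unfolding exc_mass_def by simp
  then have "(clock h + q * exc_mass) / q < clock p / q" using q_pos by (simp add: divide_strict_right_mono)
  then show ?thesis unfolding exc_start_def using q_pos by (simp add: add_divide_distrib)
qed

lemma arrival_before_excursion:
  assumes "1 \<le> j" "j < h"
  shows "clock j / q + (\<Sum>i\<in>{j..<h}. mass i) < exc_start"
proof -
  have "clock j + q * (\<Sum>i=j..h - 1. mass i) \<le> front q (h - 1)"
    using front_ge[of j "h - 1" q] assms q_pos last_le by simp
  also have "\<dots> < clock h" using root_first root_at_iff[OF q_pos, of h] assms by auto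
  finally have "(clock j + q * (\<Sum>i\<in>{j..<h}. mass i)) / q < clock h / q"
    using atLeastLessThanSuc_atLeastAtMost[of j "h - 1"] assms q_pos by (simp add: divide_strict_right_mono)
  then show ?thesis unfolding exc_start_def using q_pos by (simp add: add_divide_distrib)
qed

lemma exc_start_pos: "0 < exc_start"
  unfolding exc_start_def using clock_positive[of h] first_pos last_le q_pos by simp

lemma exc_mass_nonneg: "0 \<le> exc_mass"
  unfolding exc_mass_def using mass_nonneg first_pos last_le by (intro sum_nonneg) auto

lemma arrival_in_excursion:
  assumes "h \<le> p" "p \<le> h + r"
  shows "exc_start \<le> clock p / q" "clock p / q \<le> exc_start + exc_mass"
proof -
  show "exc_start \<le> clock p / q"
    unfolding exc_start_def using clock_le[of h p] assms first_pos last_le q_pos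
    by (simp add: divide_right_mono)
  have "(\<Sum>i\<in>{h..<p}. mass i) \<le> exc_mass"
    unfolding exc_mass_def using assms last_le first_pos by (intro sum_mono2) (auto intro: mass_nonneg)
  then show "clock p / q \<le> exc_start + exc_mass"
    using arrival_height_nonneg[OF assms] unfolding arrival_height_def exc_start_def by simp
qed

lemma arrived_during_excursion:
  assumes "exc_start \<le> u" "u \<le> exc_start + exc_mass"
  shows "arrived u = {1..<h} \<union> {p \<in> {h..h+r}. clock p / q \<le> u}"
proof (intro set_eqI iffI)
  fix p assume p: "p \<in> arrived u"
  with arrival_after_excursion[of p] assms have "p \<le> h + r" unfolding arrived_def by force
  with p show "p \<in> {1..<h} \<union> {p \<in> {h..h+r}. clock p / q \<le> u}" unfolding arrived_def by auto
next
  fix p assume p: "p \<in> {1..<h} \<union> {p \<in> {h..h+r}. clock p / q \<le> u}"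
  have "clock p / q \<le> exc_start" if "p \<in> {1..<h}"
    unfolding exc_start_def using clock_le[of p h] that last_le q_pos by (simp add: divide_right_mono)
  with p assms last_le first_pos show "p \<in> arrived u" unfolding arrived_def by auto
qed

lemma walk_floor_le_Zw_before:
  assumes "u < exc_start"
  shows "walk_floor \<le> Zw n x xi q u"
proof -
  define A where "A = {p \<in> {1..<h}. u < clock p / q}"
  have "(\<Sum>p\<in>A. mass p) \<le> exc_start - u"
  proof (cases "A = {}")
    case False
    define j where "j = Min A"
    have "finite A" unfolding A_def by simp
    then have "j \<in> A" "\<forall>p\<in>A. j \<le> p" unfolding j_def using False by auto
    then have "A \<subseteq> {j..<h}" unfolding A_def by auto
    then have "(\<Sum>p\<in>A. mass p) \<le> (\<Sum>i\<in>{j..<h}. mass i)"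
      using last_le \<open>j \<in> A\<close> by (intro sum_mono2) (auto intro: mass_nonneg simp: A_def)
    also have "\<dots> < exc_start - clock j / q"
      using arrival_before_excursion[of j] \<open>j \<in> A\<close> unfolding A_def by simp
    also have "\<dots> < exc_start - u" using \<open>j \<in> A\<close> unfolding A_def by simp
    finally show ?thesis by simp
  qed (use assms in simp)
  moreover have "(\<Sum>p\<in>{1..<h}. mass p) = (\<Sum>p\<in>{1..<h} - A. mass p) + (\<Sum>p\<in>A. mass p)"
    by (rule sum.subset_diff) (auto simp: A_def)
  moreover have "(\<Sum>p\<in>{1..<h} - A. mass p) \<le> (\<Sum>p\<in>arrived u. mass p)"
    using last_le by (intro sum_mono2) (auto intro: mass_nonneg simp: A_def arrived_def)
  ultimately show ?thesis unfolding Zw_eq_arrived walk_floor_def by simp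
qed

lemma walk_floor_le_Zw_during:
  assumes "exc_start \<le> u" "u \<le> exc_start + exc_mass"
  shows "walk_floor \<le> Zw n x xi q u"
proof -
  define D where "D = {p \<in> {h..h+r}. clock p / q \<le> u}"
  define ps where "ps = Max D"
  have "finite D" "h \<in> D" unfolding D_def using assms(1)[unfolded exc_start_def] first_pos by auto
  then have "ps \<in> D" unfolding ps_def by (intro Max_in) auto
  then have ps: "h \<le> ps" "ps \<le> h + r" "clock ps / q \<le> u" unfolding D_def by auto
  have "{h..ps} \<subseteq> D"
  proof
    fix p assume "p \<in> {h..ps}"
    then have "clock p / q \<le> clock ps / q"
      using clock_le[of p ps] ps first_pos last_le q_pos by (simp add: divide_right_mono)
    with \<open>p \<in> {h..ps}\<close> ps show "p \<in> D" unfolding D_def by auto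
  qed
  then have sum_D: "(\<Sum>i=h..ps. mass i) \<le> (\<Sum>p\<in>D. mass p)"
    using \<open>finite D\<close> first_pos last_le by (intro sum_mono2) (auto intro: mass_nonneg simp: D_def)
  have "u - exc_start \<le> (\<Sum>p\<in>D. mass p)"
  proof (cases "ps = h + r")
    case True
    then show ?thesis using assms sum_D unfolding exc_mass_def by simp
  next
    case False
    then have "Suc ps \<notin> D" using Max_ge[OF \<open>finite D\<close>, of "Suc ps"] unfolding ps_def by auto
    then have "u < clock (Suc ps) / q" using ps False unfolding D_def by auto
    also have "\<dots> \<le> exc_start + (\<Sum>i\<in>{h..<Suc ps}. mass i)"
      using arrival_height_nonneg[of "Suc ps"] ps False
      unfolding arrival_height_def exc_start_def by simp
    finally show ?thesis using sum_D atLeastLessThanSuc_atLeastAtMost[of h ps] by simp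
  qed
  moreover have "(\<Sum>p\<in>arrived u. mass p) = (\<Sum>p\<in>{1..<h}. mass p) + (\<Sum>p\<in>D. mass p)"
    unfolding arrived_during_excursion[OF assms] D_def by (rule sum.union_disjoint) auto
  ultimately show ?thesis unfolding Zw_eq_arrived walk_floor_def by simp
qed

text \<open>The infimum of the walk up to a time in the excursion is its left limit at \<open>exc_start\<close>,
  which is not attained.\<close>
lemma Zw_before_excursion:
  obtains u0 where "0 \<le> u0" "u0 < exc_start"
    and "\<And>u. u0 < u \<Longrightarrow> u < exc_start \<Longrightarrow> Zw n x xi q u = (\<Sum>p\<in>{1..<h}. mass p) - u"
proof
  define u0 where "u0 = (if h = 1 then 0 else clock (h - 1) / q)"
  show "0 \<le> u0"
  proof (cases "h = 1")
    case False
    then have "1 \<le> h - 1" "h - 1 \<le> n" using first_pos last_le by auto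
    with clock_positive q_pos show ?thesis unfolding u0_def by (simp add: less_imp_le)
  qed (simp add: u0_def)
  show "u0 < exc_start" unfolding u0_def exc_start_def
    using clock_less[of "h - 1" h] exc_start_pos[unfolded exc_start_def] q_pos first_pos last_le
    by (auto simp: divide_strict_right_mono)
  fix u assume u: "u0 < u" "u < exc_start"
  have "arrived u = {1..<h}"
  proof (intro set_eqI iffI)
    fix p assume p: "p \<in> arrived u"
    have "\<not> h \<le> p"
    proof
      assume "h \<le> p"
      then have "exc_start \<le> clock p / q"
        unfolding exc_start_def using clock_le[of h p] p first_pos q_pos unfolding arrived_def
        by (auto simp: divide_right_mono)
      with p u show False unfolding arrived_def by auto
    qed
    with p show "p \<in> {1..<h}" unfolding arrived_def by auto
  next
    fix p assume p: "p \<in> {1..<h}"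
    then have "clock p / q \<le> clock (h - 1) / q"
      using clock_le[of p "h - 1"] last_le q_pos by (auto simp: divide_right_mono)
    with p u last_le show "p \<in> arrived u" unfolding arrived_def u0_def by auto
  qed
  then show "Zw n x xi q u = (\<Sum>p\<in>{1..<h}. mass p) - u" unfolding Zw_eq_arrived by simp
qed

lemma Inf_Zw_during_excursion:
  assumes "exc_start \<le> s" "s \<le> exc_start + exc_mass"
  shows "Inf (Zw n x xi q ` {0..s}) = walk_floor"
proof (rule cInf_eq_non_empty)
  show "Zw n x xi q ` {0..s} \<noteq> {}" using assms exc_start_pos by auto
  fix v assume "v \<in> Zw n x xi q ` {0..s}"
  then obtain u where "u \<le> s" "v = Zw n x xi q u" by auto
  then show "walk_floor \<le> v"
    using walk_floor_le_Zw_before[of u] walk_floor_le_Zw_during[of u] assms by (cases "u < exc_start") auto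
next
  fix y assume y: "\<And>v. v \<in> Zw n x xi q ` {0..s} \<Longrightarrow> y \<le> v"
  obtain u0 where u0: "0 \<le> u0" "u0 < exc_start"
    and Zw_u0: "\<And>u. u0 < u \<Longrightarrow> u < exc_start \<Longrightarrow> Zw n x xi q u = (\<Sum>p\<in>{1..<h}. mass p) - u"
    using Zw_before_excursion by blast
  show "y \<le> walk_floor"
  proof (rule ccontr)
    assume "\<not> y \<le> walk_floor"
    define u where "u = (max u0 (exc_start - (y - walk_floor)) + exc_start) / 2"
    have u: "u0 < u" "u < exc_start" "exc_start - (y - walk_floor) < u" "0 \<le> u" "u \<le> s"
      unfolding u_def using u0 \<open>\<not> y \<le> walk_floor\<close> assms by auto
    then have "Zw n x xi q u < y" using Zw_u0 unfolding walk_floor_def by simp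
    moreover have "y \<le> Zw n x xi q u" using y u by auto
    ultimately show False by simp
  qed
qed

lemma Bw_during_excursion:
  assumes "exc_start \<le> s" "s \<le> exc_start + exc_mass"
  shows "Bw n x xi q s = (\<Sum>p=h..h+r. mass p * (if clock p / q \<le> s then 1 else 0)) - (s - exc_start)"
proof -
  have "(\<Sum>p=h..h+r. mass p * (if clock p / q \<le> s then 1 else 0)) =
      (\<Sum>p\<in>{p \<in> {h..h+r}. clock p / q \<le> s}. mass p)"
    by (subst sum.inter_filter) (auto intro: sum.cong)
  then have "(\<Sum>p\<in>arrived s. mass p) =
      (\<Sum>p\<in>{1..<h}. mass p) + (\<Sum>p=h..h+r. mass p * (if clock p / q \<le> s then 1 else 0))"
    unfolding arrived_during_excursion[OF assms] by (subst sum.union_disjoint) auto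
  then show ?thesis
    unfolding Bw_def Inf_Zw_during_excursion[OF assms] Zw_eq_arrived walk_floor_def by simp
qed

lemma integral_Bw_excursion:
  "integral {exc_start..exc_start + exc_mass} (Bw n x xi q) =
     (\<Sum>p=h..h+r. mass p * (exc_start + exc_mass - clock p / q)) - exc_mass\<^sup>2 / 2"
proof (rule integral_unique)
  have "((\<lambda>s. (\<Sum>p=h..h+r. mass p * (if clock p / q \<le> s then 1 else 0)) - (s - exc_start)) has_integral
      (\<Sum>p=h..h+r. mass p * (exc_start + exc_mass - clock p / q)) - exc_mass\<^sup>2 / 2)
      {exc_start..exc_start + exc_mass}"
    using has_integral_jumps_minus_drift[of "{h..h+r}" exc_start "exc_start + exc_mass"]
      arrival_in_excursion exc_mass_nonneg by simp
  then show "(Bw n x xi q has_integral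
      (\<Sum>p=h..h+r. mass p * (exc_start + exc_mass - clock p / q)) - exc_mass\<^sup>2 / 2)
      {exc_start..exc_start + exc_mass}"
    by (rule has_integral_eq[rotated]) (simp add: Bw_during_excursion)
qed

lemma excursion_area:
  "integral {exc_start..exc_start + exc_mass} (Bw n x xi q) =
     (\<Sum>l=h..h+r. (mass l)\<^sup>2 / 2 + mass l * arrival_height l)"
proof -
  define S where "S p = (\<Sum>i\<in>{h..<p}. mass i)" for p
  define A where "A = (\<Sum>p=h..h+r. mass p * arrival_height p)"
  define B where "B = (\<Sum>p=h..h+r. mass p * S p)"
  define C where "C = (\<Sum>p=h..h+r. (mass p)\<^sup>2)"
  have gap: "exc_start + exc_mass - clock p / q = arrival_height p + exc_mass - S p" for p
    by (simp add: arrival_height_def exc_start_def S_def)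
  have "(\<Sum>p=h..h+r. mass p * (exc_start + exc_mass - clock p / q)) =
      (\<Sum>p=h..h+r. mass p * (arrival_height p + exc_mass - S p))"
    by (simp only: gap)
  also have "\<dots> = (\<Sum>p=h..h+r. mass p * arrival_height p + exc_mass * mass p - mass p * S p)"
    by (simp add: algebra_simps)
  also have "\<dots> = A + exc_mass\<^sup>2 - B"
    unfolding A_def B_def sum.distrib sum_subtractf sum_distrib_left[symmetric]
    by (simp add: exc_mass_def power2_eq_square)
  finally have jumps: "(\<Sum>p=h..h+r. mass p * (exc_start + exc_mass - clock p / q)) = A + exc_mass\<^sup>2 - B" .
  have "exc_mass\<^sup>2 = C + 2 * B"
    using power2_sum_atLeastLessThan[of mass h "Suc (h + r)"]
    unfolding exc_mass_def B_def C_def S_def atLeastLessThanSuc_atLeastAtMost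
    by (simp add: sum.distrib sum_distrib_left mult.assoc)
  moreover have "(\<Sum>l=h..h+r. (mass l)\<^sup>2 / 2 + mass l * arrival_height l) = C / 2 + A"
    unfolding A_def C_def by (simp add: sum.distrib sum_divide_distrib)
  ultimately show ?thesis
    unfolding integral_Bw_excursion jumps by (simp add: field_simps)
qed

end

theorem corollary1:
  fixes n h r :: nat and x xi :: "nat \<Rightarrow> real" and \<pi> :: "nat \<Rightarrow> nat" and q :: real
  assumes "1 \<le> n"
    and "\<And>i j. 1 \<le> i \<Longrightarrow> i \<le> j \<Longrightarrow> j \<le> n \<Longrightarrow> x j \<le> x i"
    and "\<And>i. 1 \<le> i \<Longrightarrow> i \<le> n \<Longrightarrow> 0 < x i"
    and "\<And>i. 1 \<le> i \<Longrightarrow> i \<le> n \<Longrightarrow> 0 < xi i"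
    and "bij_betw \<pi> {1..n} {1..n}"
    and "\<And>i j. 1 \<le> i \<Longrightarrow> i < j \<Longrightarrow> j \<le> n \<Longrightarrow> xi (\<pi> i) < xi (\<pi> j)"
    and "0 < q"
    and "1 \<le> h" and "h + r \<le> n"
    and "is_root x xi \<pi> q h"
    and "\<And>m. h < m \<Longrightarrow> m \<le> h + r \<Longrightarrow> \<not> is_root x xi \<pi> q m"
    and "h + r = n \<or> is_root x xi \<pi> q (h + r + 1)"
  shows "cum_rate n x xi \<pi> q h r =
         q * integral {xi (\<pi> h) / q .. xi (\<pi> h) / q + (\<Sum>i=h..h+r. x (\<pi> i))} (Bw n x xi q)"
proof -
  interpret excursion n x xi \<pi> q h r
    using assms(3-) by unfold_locales auto
  have "{xi (\<pi> h) / q .. xi (\<pi> h) / q + (\<Sum>i=h..h+r. x (\<pi> i))} = {exc_start..exc_start + exc_mass}"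
    by (simp add: exc_start_def exc_mass_def clock_def mass_def)
  then show ?thesis by (simp only: cum_rate_eq excursion_area)
qed

end
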